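(* Assume that $K$ is w-simple, that $\langle S|$ and the inhomogeneities are such that the covectors $\langle h_1,\dots,h_N|$, $(h_1,\dots,h_N)\in\{0,\dots,n-1\}^N$, form a basis of the dual of $\mathcal H$, and let $\mathbb B^{(K)}(\lambda)$ be the operator, diagonal in this basis, defined by $\langle h_1,\dots,h_N|\mathbb B^{(K)}(\lambda)=b_{h_1,\dots,h_N}(\lambda)\langle h_1,\dots,h_N|$ with $b_{h_1,\dots,h_N}(\lambda)=\prod_{a=1}^N(\lambda-\xi_a)^{n-1-h_a}(\lambda-\xi_a+\eta)^{h_a}$. Let $t_1(\lambda)$ be any eigenvalue of $T^{(K)}_1(\lambda)$ and let $\varphi_t(\lambda)=\prod_{a=1}^{\mathsf M}(\lambda-\lambda_a)$, with $\mathsf M\le N$ and $\lambda_a\ne\xi_b$ for all $a,b$, be the polynomial satisfying with $t_0\equiv 1,t_1,\dots,t_n$ the quantum spectral curve equation $\sum_{b=0}^n\alpha_b(\lambda)\varphi_t(\lambda-b\eta)t_{n-b}(\lambda-b\eta)=0$ with $\bar\alpha=\mathsf k_1$. Then the eigenvector of $T^{(K)}_1(\lambda)$ associated with $t_1(\lambda)$ is (up to normalization) $$|t\rangle=\prod_{a=1}^{\mathsf M}\mathbb B^{(K)}(\lambda_a)\,|t_0\rangle .$$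
   Context: Fix integers $n\ge 2$, $N\ge1$, $\eta\in\mathbb C$ and generic inhomogeneities $\xi_1,\dots,\xi_N$. Let $\mathcal H=\bigotimes_{l=1}^N\mathbb C^n$, $R_{a,b}(\lambda)=\lambda I+\eta\,\mathbb P_{a,b}$ ($\mathbb P$ the permutation), $M^{(K)}_a(\lambda)=K_aR_{a,N}(\lambda-\xi_N)\cdots R_{a,1}(\lambda-\xi_1)$, and fused transfer matrices $T^{(K)}_m(\lambda)=\mathrm{tr}_{1,\dots,m}[P^-_{1,\dots,m}M_1^{(K)}(\lambda)\cdots M_m^{(K)}(\lambda-(m-1)\eta)]$ with $P^-_{1,\dots,m}=\frac1{m!}\sum_{\pi\in S_m}\mathrm{sgn}(\pi)P_\pi$. Set $T_m^{(K,\infty)}=\mathrm{tr}_{1,\dots,m}[P^-_{1,\dots,m}K_1\cdots K_m]$, $g_a^{(m)}(\lambda)=\prod_{b\ne a}\frac{\lambda-\xi_b}{\xi_a-\xi_b}\prod_{b=1}^N\prod_{r=1}^{m-1}\frac1{\xi_a-\xi_b-r\eta}$. Given an eigenvalue $t_1$ of $T_1^{(K)}$ (a function with $T_1^{(K)}(\lambda)v=t_1(\lambda)v$ for all $\lambda$, $v\neq0$), set $t_0\equiv1$, $t_n(\lambda)=\mathrm{q\text{-}det}\,M^{(K)}(\lambda)=\det K\prod_{b=1}^N[(\lambda-\xi_b+\eta)\prod_{m=1}^{n-1}(\lambda-\xi_b-m\eta)]$ and, for $m\in\{1,\dots,n-2\}$, $t_{m+1}(\lambda)=\prod_{b=1}^N\prod_{r=1}^m(\lambda-\xi_b-r\eta)[T^{(K,\infty)}_{m+1}\prod_b(\lambda-\xi_b)+\sum_ag_a^{(m+1)}(\lambda)t_1(\xi_a)t_m(\xi_a-\eta)]$.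 Coefficients: $\alpha_0=-1$, $\alpha_1(\lambda)=\bar\alpha\prod_{a=1}^N(\lambda+\eta-\xi_a)$, $\alpha_{1+j}(\lambda)=(-1)^j\prod_{h=0}^j\alpha_1(\lambda-h\eta)$. A matrix is w-simple if each eigenvalue has a one-dimensional eigenspace. Write $K=W_KK_JW_K^{-1}$ with $K_J$ an upper-triangular Jordan form such that $K_Je_1=\mathsf k_1e_1$, $\mathsf k_1\ne0$, $e_1=(1,0,\dots,0)^T$; $|t_0\rangle=(\bigotimes_{a=1}^NW_{K,a})\,e_1^{\otimes N}$. Given a covector $\langle S|$, $\langle h_1,\dots,h_N|=\langle S|\prod_{l=1}^N(T_1^{(K)}(\xi_l))^{h_l}$. *)

theory Defs
  imports "Jordan_Normal_Form.Jordan_Normal_Form_Uniqueness" "HOL-Combinatorics.Permutations"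
begin

text \<open>Quantum space H = (C^n)^{\<otimes> N}. Basis vectors are indexed by configurations
  x : {1..N} \<rightarrow> {0..n-1} (extensional functions). Vectors and covectors are functions
  configuration \<Rightarrow> complex (only values on configurations matter); operators on H are
  given by their matrix entries A x y; operators on C^n \<otimes> H (auxiliary space a, i.e.
  index (a,x) with a < n) by entries A (a,x) (b,y).\<close>

type_synonym config = "nat \<Rightarrow> nat"
type_synonym hvec = "config \<Rightarrow> complex"
type_synonym hop = "config \<Rightarrow> config \<Rightarrow> complex"
type_synonym aop = "nat \<times> config \<Rightarrow> nat \<times> config \<Rightarrow> complex"

definition configs :: "nat \<Rightarrow> nat \<Rightarrow> config set" where
  "configs n N = PiE {1..N} (\<lambda>_. {..<n})"

definition op_app :: "nat \<Rightarrow> nat \<Rightarrow> hop \<Rightarrow> hvec \<Rightarrow> hvec" where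
  "op_app n N A v = (\<lambda>x. \<Sum>y\<in>configs n N. A x y * v y)"

definition covec_app :: "nat \<Rightarrow> nat \<Rightarrow> hvec \<Rightarrow> hop \<Rightarrow> hvec" where
  "covec_app n N phi A = (\<lambda>y. \<Sum>x\<in>configs n N. phi x * A x y)"

definition aop_mult :: "nat \<Rightarrow> nat \<Rightarrow> aop \<Rightarrow> aop \<Rightarrow> aop" where
  "aop_mult n N A B = (\<lambda>(a,x) (c,z). \<Sum>b<n. \<Sum>y\<in>configs n N. A (a,x) (b,y) * B (b,y) (c,z))"

definition aop_id :: aop where
  "aop_id = (\<lambda>(a,x) (b,y). if a = b \<and> x = y then 1 else 0)"

definition K_aux :: "complex mat \<Rightarrow> aop" where
  "K_aux K = (\<lambda>(a,x) (b,y). if x = y then K $$ (a,b) else 0)"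

text \<open>R_{a,l}(mu) = mu I + eta P_{a,l}; P_{a,l}(e_b \<otimes> e_y) = e_{y l} \<otimes> e_{y(l:=b)}.\<close>
definition R_aux :: "complex \<Rightarrow> nat \<Rightarrow> complex \<Rightarrow> aop" where
  "R_aux eta l mu = (\<lambda>(a,x) (b,y).
     (if a = b \<and> x = y then mu else 0) + (if a = y l \<and> x = y(l := b) then eta else 0))"

fun R_prod :: "nat \<Rightarrow> nat \<Rightarrow> complex \<Rightarrow> (nat \<Rightarrow> complex) \<Rightarrow> complex \<Rightarrow> nat \<Rightarrow> aop" where
  "R_prod n N eta xi lam 0 = aop_id"
| "R_prod n N eta xi lam (Suc l) =
     aop_mult n N (R_aux eta (Suc l) (lam - xi (Suc l))) (R_prod n N eta xi lam l)"

definition monodromy :: "nat \<Rightarrow> nat \<Rightarrow> complex \<Rightarrow> (nat \<Rightarrow> complex) \<Rightarrow> complex mat \<Rightarrow> complex \<Rightarrow> aop" where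
  "monodromy n N eta xi K lam = aop_mult n N (K_aux K) (R_prod n N eta xi lam N)"

definition transfer1 :: "nat \<Rightarrow> nat \<Rightarrow> complex \<Rightarrow> (nat \<Rightarrow> complex) \<Rightarrow> complex mat \<Rightarrow> complex \<Rightarrow> hop" where
  "transfer1 n N eta xi K lam = (\<lambda>x y. \<Sum>a<n. monodromy n N eta xi K lam (a,x) (a,y))"

text \<open>T^{(K,\<infinity>)}_m = tr_{1..m}[P^-_{1..m} K_1 \<cdots> K_m], written out in components:
  tr[P_pi K^{\<otimes> m}] = sum over i : {0..m-1} \<rightarrow> {0..n-1} of prod_j K_{i(pi j), i j}.\<close>
definition Tinf :: "nat \<Rightarrow> complex mat \<Rightarrow> nat \<Rightarrow> complex" where
  "Tinf n K m = (1 / of_nat (fact m)) *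
     (\<Sum>p\<in>{p. p permutes {..<m}}. of_int (sign p) *
        (\<Sum>i\<in>PiE {..<m} (\<lambda>_. {..<n}). \<Prod>j<m. K $$ (i (p j), i j)))"

definition g_coef :: "nat \<Rightarrow> complex \<Rightarrow> (nat \<Rightarrow> complex) \<Rightarrow> nat \<Rightarrow> nat \<Rightarrow> complex \<Rightarrow> complex" where
  "g_coef N eta xi m a lam =
     (\<Prod>b\<in>{1..N}-{a}. (lam - xi b) / (xi a - xi b)) *
     (\<Prod>b\<in>{1..N}. \<Prod>r\<in>{1..<m}. 1 / (xi a - xi b - of_nat r * eta))"

definition qdet :: "nat \<Rightarrow> nat \<Rightarrow> complex \<Rightarrow> (nat \<Rightarrow> complex) \<Rightarrow> complex mat \<Rightarrow> complex \<Rightarrow> complex" where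
  "qdet n N eta xi K lam = det K *
     (\<Prod>b\<in>{1..N}. (lam - xi b + eta) * (\<Prod>m\<in>{1..n-1}. lam - xi b - of_nat m * eta))"

text \<open>The functions t_0 = 1, t_1, ..., t_n (only indices 0..n are meaningful).\<close>
fun tseq :: "nat \<Rightarrow> nat \<Rightarrow> complex \<Rightarrow> (nat \<Rightarrow> complex) \<Rightarrow> complex mat \<Rightarrow> (complex \<Rightarrow> complex)
    \<Rightarrow> nat \<Rightarrow> complex \<Rightarrow> complex" where
  "tseq n N eta xi K t1 0 lam = 1"
| "tseq n N eta xi K t1 (Suc 0) lam = t1 lam"
| "tseq n N eta xi K t1 (Suc (Suc m)) lam =
     (if Suc (Suc m) = n then qdet n N eta xi K lam
      else (\<Prod>b\<in>{1..N}. \<Prod>r\<in>{1..Suc m}. lam - xi b - of_nat r * eta) *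
        (Tinf n K (Suc (Suc m)) * (\<Prod>b\<in>{1..N}. lam - xi b)
         + (\<Sum>a\<in>{1..N}. g_coef N eta xi (Suc (Suc m)) a lam * t1 (xi a)
              * tseq n N eta xi K t1 (Suc m) (xi a - eta))))"

definition alpha1 :: "nat \<Rightarrow> complex \<Rightarrow> (nat \<Rightarrow> complex) \<Rightarrow> complex \<Rightarrow> complex \<Rightarrow> complex" where
  "alpha1 N eta xi abar lam = abar * (\<Prod>a\<in>{1..N}. lam + eta - xi a)"

definition alpha :: "nat \<Rightarrow> complex \<Rightarrow> (nat \<Rightarrow> complex) \<Rightarrow> complex \<Rightarrow> nat \<Rightarrow> complex \<Rightarrow> complex" where
  "alpha N eta xi abar j lam =
     (if j = 0 then -1
      else (-1) ^ (j - 1) * (\<Prod>h\<in>{0..j-1}. alpha1 N eta xi abar (lam - of_nat h * eta)))"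

definition w_simple :: "complex mat \<Rightarrow> bool" where
  "w_simple K = (\<forall>e. eigenvalue K e \<longrightarrow> kernel_dim (char_matrix K e) = 1)"

text \<open>|t_0> = (\<otimes>_a W_{K,a}) e_1^{\<otimes> N}.\<close>
definition t0_vec :: "nat \<Rightarrow> complex mat \<Rightarrow> hvec" where
  "t0_vec N W = (\<lambda>x. \<Prod>l\<in>{1..N}. W $$ (x l, 0))"

fun hcov_aux :: "nat \<Rightarrow> nat \<Rightarrow> complex \<Rightarrow> (nat \<Rightarrow> complex) \<Rightarrow> complex mat \<Rightarrow> hvec
    \<Rightarrow> config \<Rightarrow> nat \<Rightarrow> hvec" where
  "hcov_aux n N eta xi K S h 0 = S"
| "hcov_aux n N eta xi K S h (Suc l) =
     ((\<lambda>phi. covec_app n N phi (transfer1 n N eta xi K (xi (Suc l)))) ^^ h (Suc l))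
       (hcov_aux n N eta xi K S h l)"

definition hcov :: "nat \<Rightarrow> nat \<Rightarrow> complex \<Rightarrow> (nat \<Rightarrow> complex) \<Rightarrow> complex mat \<Rightarrow> hvec
    \<Rightarrow> config \<Rightarrow> hvec" where
  "hcov n N eta xi K S h = hcov_aux n N eta xi K S h N"

definition is_dual_basis :: "nat \<Rightarrow> nat \<Rightarrow> (config \<Rightarrow> hvec) \<Rightarrow> bool" where
  "is_dual_basis n N cv = (\<forall>phi. \<exists>!c. c \<in> extensional (configs n N) \<and>
      (\<forall>y\<in>configs n N. phi y = (\<Sum>h\<in>configs n N. c h * cv h y)))"

definition b_eig :: "nat \<Rightarrow> nat \<Rightarrow> complex \<Rightarrow> (nat \<Rightarrow> complex) \<Rightarrow> config \<Rightarrow> complex \<Rightarrow> complex" where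
  "b_eig n N eta xi h lam = (\<Prod>a\<in>{1..N}. (lam - xi a) ^ (n - 1 - h a) * (lam - xi a + eta) ^ h a)"

fun B_prod :: "nat \<Rightarrow> nat \<Rightarrow> (complex \<Rightarrow> hop) \<Rightarrow> (nat \<Rightarrow> complex) \<Rightarrow> nat \<Rightarrow> hvec \<Rightarrow> hvec" where
  "B_prod n N B lams 0 v = v"
| "B_prod n N B lams (Suc M) v = B_prod n N B lams M (op_app n N (B (lams (Suc M))) v)"

end

theory Submission
  imports Defs
begin

text \<open>The reference state |t0> = (W e1)^{\<otimes>N} is an eigenvector of every T1(\<xi>s): at
  \<lambda> = \<xi>s the factor R_{a,s}(0) = \<eta> P_{a,s} collapses the trace over the auxiliary space onto
  site s, leaving K_s and the R_{s,j}(\<xi>s - \<xi>j), which act on the symmetric product state as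
  k1 and \<xi>s - \<xi>j + \<eta>; so the eigenvalue is \<alpha>1(\<xi>s). Evaluating the quantum spectral curve
  at \<lambda> = \<xi>s + (n - 1)\<eta>, where t2, ..., tn vanish, gives t1(\<xi>s) \<phi>(\<xi>s) = \<alpha>1(\<xi>s) \<phi>(\<xi>s - \<eta>).
  As B(\<lambda>) is diagonal on the covectors <h|, this yields
  <h| B(\<lambda>1) ... B(\<lambda>M) |t0> = D \<Prod>a t1(\<xi>a)^ha <S|t0> with D \<noteq> 0, while every eigenvector w
  with eigenvalue t1 has <h|w> = \<Prod>a t1(\<xi>a)^ha <S|w>. Since the <h| form a basis, all these
  vectors are proportional.\<close>

type_synonym avec = "nat \<times> config \<Rightarrow> complex"

lemma configs_finite: "finite (configs n N)"
  by (simp add: configs_def finite_PiE)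

lemma configs_less: "x \<in> configs n N \<Longrightarrow> l \<in> {1..N} \<Longrightarrow> x l < n"
  by (auto simp: configs_def PiE_iff)

lemma fun_upd_in_configs:
  "x \<in> configs n N \<Longrightarrow> l \<in> {1..N} \<Longrightarrow> a < n \<Longrightarrow> x(l := a) \<in> configs n N"
  by (auto simp: configs_def PiE_iff extensional_def)

section \<open>Operators on the auxiliary space tensored with the quantum space\<close>

definition aop_apply :: "nat \<Rightarrow> nat \<Rightarrow> aop \<Rightarrow> avec \<Rightarrow> avec" where
  "aop_apply n N A F = (\<lambda>(a,x). \<Sum>b<n. \<Sum>y\<in>configs n N. A (a,x) (b,y) * F (b,y))"

lemma aop_apply_eq_sum: "aop_apply n N A F p = (\<Sum>q\<in>{..<n} \<times> configs n N. A p q * F q)"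
  by (cases p) (simp add: aop_apply_def sum.cartesian_product split_def)

lemma aop_apply_mult: "aop_apply n N (aop_mult n N A B) F = aop_apply n N A (aop_apply n N B F)"
proof
  fix p
  let ?S = "{..<n} \<times> configs n N"
  have AB: "aop_mult n N A B p q = (\<Sum>r\<in>?S. A p r * B r q)" for q
    by (cases p, cases q) (simp add: aop_mult_def sum.cartesian_product split_def)
  have "aop_apply n N (aop_mult n N A B) F p = (\<Sum>q\<in>?S. \<Sum>r\<in>?S. A p r * B r q * F q)"
    by (simp add: aop_apply_eq_sum AB sum_distrib_right)
  also have "\<dots> = (\<Sum>r\<in>?S. A p r * (\<Sum>q\<in>?S. B r q * F q))"
    by (subst sum.swap) (simp add: sum_distrib_left mult.assoc)
  finally show "aop_apply n N (aop_mult n N A B) F p = aop_apply n N A (aop_apply n N B F) p"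
    by (simp add: aop_apply_eq_sum)
qed

definition aux_agree :: "nat \<Rightarrow> nat \<Rightarrow> avec \<Rightarrow> avec \<Rightarrow> bool" where
  "aux_agree n N F G \<longleftrightarrow> (\<forall>a<n. \<forall>x\<in>configs n N. F (a,x) = G (a,x))"

lemma aux_agree_trans: "aux_agree n N F G \<Longrightarrow> aux_agree n N G H \<Longrightarrow> aux_agree n N F H"
  by (simp add: aux_agree_def)

lemma aop_apply_cong: "aux_agree n N F G \<Longrightarrow> aop_apply n N A F = aop_apply n N A G"
  unfolding aop_apply_def aux_agree_def by (intro ext) (auto intro!: sum.cong)

definition R_apply :: "complex \<Rightarrow> nat \<Rightarrow> complex \<Rightarrow> avec \<Rightarrow> avec" where
  "R_apply eta l mu F = (\<lambda>(a,x). mu * F (a,x) + eta * F (x l, x(l := a)))"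

definition K_apply :: "nat \<Rightarrow> complex mat \<Rightarrow> avec \<Rightarrow> avec" where
  "K_apply n K F = (\<lambda>(a,x). \<Sum>b<n. K $$ (a,b) * F (b,x))"

definition R_chain :: "complex \<Rightarrow> (nat \<Rightarrow> complex) \<Rightarrow> complex \<Rightarrow> nat list \<Rightarrow> avec \<Rightarrow> avec" where
  "R_chain eta xi lam ls F = fold (\<lambda>l. R_apply eta l (lam - xi l)) ls F"

lemma R_aux_eq: "R_aux eta l mu (a,x) q
    = (if q = (a,x) then mu else 0) + (if q = (x l, x(l := a)) then eta else 0)"
proof (cases q)
  case (Pair b y)
  have "(a = y l \<and> x = y(l := b)) \<longleftrightarrow> (b = x l \<and> y = x(l := a))"
    by (auto simp: fun_eq_iff)
  then show ?thesis using Pair by (auto simp: R_aux_def)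
qed

lemma aop_apply_R_aux:
  assumes "l \<in> {1..N}"
  shows "aux_agree n N (aop_apply n N (R_aux eta l mu) F) (R_apply eta l mu F)"
  unfolding aux_agree_def
proof (intro allI impI ballI)
  fix a x assume a: "a < n" and x: "x \<in> configs n N"
  let ?S = "{..<n} \<times> configs n N"
  have "(x l, x(l := a)) \<in> ?S" using a x assms by (simp add: configs_less fun_upd_in_configs)
  moreover have "aop_apply n N (R_aux eta l mu) F (a,x)
      = (\<Sum>q\<in>?S. if q = (a,x) then mu * F q else 0) + (\<Sum>q\<in>?S. if q = (x l, x(l := a)) then eta * F q else 0)"
    unfolding aop_apply_eq_sum R_aux_eq distrib_right sum.distrib[symmetric] by (rule sum.cong) auto
  ultimately show "aop_apply n N (R_aux eta l mu) F (a,x) = R_apply eta l mu F (a,x)"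
    using a x by (simp add: R_apply_def configs_finite)
qed

lemma aop_apply_K_aux: "aux_agree n N (aop_apply n N (K_aux K) F) (K_apply n K F)"
  unfolding aux_agree_def
proof (intro allI impI ballI)
  fix a x assume "a < n" and x: "x \<in> configs n N"
  have "aop_apply n N (K_aux K) F (a,x)
      = (\<Sum>b<n. \<Sum>y\<in>configs n N. if y = x then K $$ (a,b) * F (b,y) else 0)"
    by (auto simp: aop_apply_def K_aux_def intro!: sum.cong)
  then show "aop_apply n N (K_aux K) F (a,x) = K_apply n K F (a,x)"
    using x by (simp add: K_apply_def configs_finite)
qed

lemma R_apply_cong:
  "l \<in> {1..N} \<Longrightarrow> aux_agree n N F G \<Longrightarrow> aux_agree n N (R_apply eta l mu F) (R_apply eta l mu G)"
  unfolding aux_agree_def R_apply_def by (auto simp: configs_less fun_upd_in_configs)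

lemma K_apply_cong: "aux_agree n N F G \<Longrightarrow> aux_agree n N (K_apply n K F) (K_apply n K G)"
  unfolding aux_agree_def K_apply_def by auto

lemma R_chain_cong:
  "set ls \<subseteq> {1..N} \<Longrightarrow> aux_agree n N F G
    \<Longrightarrow> aux_agree n N (R_chain eta xi lam ls F) (R_chain eta xi lam ls G)"
proof (induction ls arbitrary: F G)
  case (Cons l ls)
  then show ?case
    using Cons.IH[OF _ R_apply_cong] by (simp add: R_chain_def)
qed (simp add: R_chain_def)

lemma aop_apply_R_prod:
  "l \<le> N \<Longrightarrow> aux_agree n N (aop_apply n N (R_prod n N eta xi lam l) F) (R_chain eta xi lam [1..<Suc l] F)"
proof (induction l)
  case 0
  have "aop_id p q * F q = (if q = p then F p else 0)" for p q
    by (cases p, cases q) (auto simp: aop_id_def)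
  then show ?case
    by (auto simp: aux_agree_def aop_apply_eq_sum R_chain_def configs_finite)
next
  case (Suc l)
  have "aop_apply n N (R_prod n N eta xi lam (Suc l)) F
      = aop_apply n N (R_aux eta (Suc l) (lam - xi (Suc l))) (R_chain eta xi lam [1..<Suc l] F)"
    using Suc by (simp add: aop_apply_mult aop_apply_cong)
  then show ?case
    using aop_apply_R_aux[of "Suc l" N n eta] Suc.prems by (simp add: R_chain_def)
qed

definition tensor_unit :: "nat \<Rightarrow> hvec \<Rightarrow> avec" where
  "tensor_unit c w = (\<lambda>(b,y). if b = c then w y else 0)"

lemma transfer1_apply:
  assumes x: "x \<in> configs n N"
  shows "op_app n N (transfer1 n N eta xi K lam) w x
       = (\<Sum>c<n. K_apply n K (R_chain eta xi lam [1..<Suc N] (tensor_unit c w)) (c,x))"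
proof -
  let ?M = "monodromy n N eta xi K lam"
  have "(\<Sum>y\<in>configs n N. ?M (c,x) (c,y) * w y)
      = K_apply n K (R_chain eta xi lam [1..<Suc N] (tensor_unit c w)) (c,x)" if c: "c < n" for c
  proof -
    have "aux_agree n N (aop_apply n N ?M (tensor_unit c w))
        (K_apply n K (R_chain eta xi lam [1..<Suc N] (tensor_unit c w)))"
      unfolding monodromy_def aop_apply_mult
      by (rule aux_agree_trans[OF aop_apply_K_aux K_apply_cong[OF aop_apply_R_prod]]) simp
    moreover have "aop_apply n N ?M (tensor_unit c w) (c,x) = (\<Sum>y\<in>configs n N. ?M (c,x) (c,y) * w y)"
    proof -
      have "aop_apply n N ?M (tensor_unit c w) (c,x)
          = (\<Sum>b<n. if b = c then \<Sum>y\<in>configs n N. ?M (c,x) (c,y) * w y else 0)"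
        unfolding aop_apply_def tensor_unit_def by (simp only: case_prod_conv) (intro sum.cong, auto)
      then show ?thesis using c by simp
    qed
    ultimately show ?thesis using c x by (simp add: aux_agree_def)
  qed
  moreover have "op_app n N (transfer1 n N eta xi K lam) w x = (\<Sum>c<n. \<Sum>y\<in>configs n N. ?M (c,x) (c,y) * w y)"
    by (simp add: op_app_def transfer1_def sum_distrib_right sum.swap[of _ "configs n N"])
  ultimately show ?thesis by simp
qed

section \<open>The transfer matrix at an inhomogeneity\<close>

text \<open>After exchanging the auxiliary space with site \<open>s\<close> (\<open>swap_aux s\<close>), the factors
  \<open>R\<^sub>a\<^sub>,\<^sub>j\<close> and \<open>K\<^sub>a\<close> become \<open>R\<^sub>s\<^sub>,\<^sub>j\<close> (\<open>R_site_apply\<close>) and \<open>K\<^sub>s\<close> (\<open>K_site_apply\<close>).\<close>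

definition swap_aux :: "nat \<Rightarrow> avec \<Rightarrow> avec" where
  "swap_aux s F = (\<lambda>(a,x). F (x s, x(s := a)))"

definition R_site_apply :: "complex \<Rightarrow> nat \<Rightarrow> nat \<Rightarrow> complex \<Rightarrow> avec \<Rightarrow> avec" where
  "R_site_apply eta s j mu F = (\<lambda>(a,x). mu * F (a,x) + eta * F (a, x(s := x j, j := x s)))"

definition R_site_chain :: "complex \<Rightarrow> (nat \<Rightarrow> complex) \<Rightarrow> complex \<Rightarrow> nat \<Rightarrow> nat list \<Rightarrow> avec \<Rightarrow> avec" where
  "R_site_chain eta xi lam s js F = fold (\<lambda>j. R_site_apply eta s j (lam - xi j)) js F"

definition K_site_apply :: "nat \<Rightarrow> complex mat \<Rightarrow> nat \<Rightarrow> avec \<Rightarrow> avec" where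
  "K_site_apply n K s F = (\<lambda>(a,x). \<Sum>b<n. K $$ (x s, b) * F (a, x(s := b)))"

definition fix_site :: "nat \<Rightarrow> nat \<Rightarrow> avec \<Rightarrow> avec" where
  "fix_site s c F = (\<lambda>(a,x). F (a, x(s := c)))"

definition aux_scale :: "complex \<Rightarrow> avec \<Rightarrow> avec" where
  "aux_scale e F = (\<lambda>p. e * F p)"

lemma R_apply_zero: "R_apply eta s 0 F = aux_scale eta (swap_aux s F)"
  by (rule ext, clarify) (simp add: R_apply_def aux_scale_def swap_aux_def)

lemma R_apply_scale: "R_apply eta j mu (aux_scale e F) = aux_scale e (R_apply eta j mu F)"
  by (rule ext, clarify) (simp add: R_apply_def aux_scale_def algebra_simps)

lemma R_chain_scale: "R_chain eta xi lam ls (aux_scale e F) = aux_scale e (R_chain eta xi lam ls F)"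
  by (induction ls arbitrary: F) (simp_all add: R_chain_def R_apply_scale)

lemma R_site_apply_scale: "R_site_apply eta s j mu (aux_scale e F) = aux_scale e (R_site_apply eta s j mu F)"
  by (rule ext, clarify) (simp add: R_site_apply_def aux_scale_def algebra_simps)

lemma R_site_chain_scale:
  "R_site_chain eta xi lam s js (aux_scale e F) = aux_scale e (R_site_chain eta xi lam s js F)"
  by (induction js arbitrary: F) (simp_all add: R_site_chain_def R_site_apply_scale)

lemma K_apply_scale: "K_apply n K (aux_scale e F) = aux_scale e (K_apply n K F)"
  by (rule ext, clarify) (simp add: K_apply_def aux_scale_def sum_distrib_left algebra_simps)

lemma K_site_apply_scale: "K_site_apply n K s (aux_scale e F) = aux_scale e (K_site_apply n K s F)"
  by (rule ext, clarify) (simp add: K_site_apply_def aux_scale_def sum_distrib_left algebra_simps)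

lemma R_apply_swap_aux:
  assumes "j \<noteq> s"
  shows "R_apply eta j mu (swap_aux s F) = swap_aux s (R_site_apply eta s j mu F)"
proof (rule ext, clarify)
  fix a :: nat and x :: config
  have "x(j := a, s := x j) = (x(s := a))(s := (x(s := a)) j, j := (x(s := a)) s)"
    using assms by (auto simp: fun_eq_iff)
  then show "R_apply eta j mu (swap_aux s F) (a,x) = swap_aux s (R_site_apply eta s j mu F) (a,x)"
    using assms by (simp add: R_apply_def swap_aux_def R_site_apply_def)
qed

lemma R_chain_swap_aux:
  "s \<notin> set ls \<Longrightarrow> R_chain eta xi lam ls (swap_aux s F) = swap_aux s (R_site_chain eta xi lam s ls F)"
  by (induction ls arbitrary: F) (auto simp: R_chain_def R_site_chain_def R_apply_swap_aux)

lemma K_apply_swap_aux: "K_apply n K (swap_aux s F) = swap_aux s (K_site_apply n K s F)"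
  by (rule ext, clarify) (simp add: K_apply_def swap_aux_def K_site_apply_def)

lemma R_site_apply_R_apply_commute:
  assumes "j \<noteq> s" "j \<noteq> j'" "s \<noteq> j'"
  shows "R_site_apply eta s j' mu (R_apply eta j mu' F) = R_apply eta j mu' (R_site_apply eta s j' mu F)"
proof (rule ext, clarify)
  fix a :: nat and x :: config
  have "(x(s := x j', j' := x s)) j = x j" using assms by simp
  moreover have "x(s := x j', j' := x s, j := a) = x(j := a, s := (x(j := a)) j', j' := (x(j := a)) s)"
    using assms by (auto simp: fun_eq_iff)
  ultimately show "R_site_apply eta s j' mu (R_apply eta j mu' F) (a,x)
      = R_apply eta j mu' (R_site_apply eta s j' mu F) (a,x)"
    by (simp add: R_site_apply_def R_apply_def algebra_simps)
qed

lemma R_site_chain_R_chain_commute: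
  assumes "s \<notin> set ls" "s \<notin> set js" "set ls \<inter> set js = {}"
  shows "R_site_chain eta xi lam s js (R_chain eta xi lam ls F) = R_chain eta xi lam ls (R_site_chain eta xi lam s js F)"
proof -
  have R_site_apply_R_chain:
    "R_site_apply eta s j mu (R_chain eta xi lam ls G) = R_chain eta xi lam ls (R_site_apply eta s j mu G)"
    if "j \<notin> set ls" "j \<noteq> s" for j mu G
    using assms(1) that
  proof (induction ls arbitrary: G)
    case (Cons l ls)
    then have "R_site_apply eta s j mu (R_apply eta l mu' G) = R_apply eta l mu' (R_site_apply eta s j mu G)" for mu' G
      by (intro R_site_apply_R_apply_commute) auto
    with Cons show ?case by (simp add: R_chain_def)
  qed (simp add: R_chain_def)
  show ?thesis
    using assms(2,3) by (induction js arbitrary: F) (auto simp: R_site_chain_def R_site_apply_R_chain)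
qed

lemma K_site_apply_R_apply_commute:
  assumes "j \<noteq> s"
  shows "K_site_apply n K s (R_apply eta j mu F) = R_apply eta j mu (K_site_apply n K s F)"
proof (rule ext, clarify)
  fix a :: nat and x :: config
  have "x(s := b, j := a) = x(j := a, s := b)" for b using assms by (auto simp: fun_eq_iff)
  then show "K_site_apply n K s (R_apply eta j mu F) (a,x) = R_apply eta j mu (K_site_apply n K s F) (a,x)"
    using assms by (simp add: K_site_apply_def R_apply_def sum_distrib_left sum.distrib algebra_simps)
qed

lemma K_site_apply_R_chain_commute:
  "s \<notin> set ls \<Longrightarrow> K_site_apply n K s (R_chain eta xi lam ls F) = R_chain eta xi lam ls (K_site_apply n K s F)"
  by (induction ls arbitrary: F) (auto simp: R_chain_def K_site_apply_R_apply_commute)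

lemma fix_site_R_apply_commute:
  assumes "j \<noteq> s"
  shows "fix_site s c (R_apply eta j mu F) = R_apply eta j mu (fix_site s c F)"
proof (rule ext, clarify)
  fix a :: nat and x :: config
  have "x(s := c, j := a) = x(j := a, s := c)" using assms by (auto simp: fun_eq_iff)
  then show "fix_site s c (R_apply eta j mu F) (a,x) = R_apply eta j mu (fix_site s c F) (a,x)"
    using assms by (simp add: fix_site_def R_apply_def)
qed

lemma fix_site_R_chain_commute:
  "s \<notin> set ls \<Longrightarrow> fix_site s c (R_chain eta xi lam ls F) = R_chain eta xi lam ls (fix_site s c F)"
  by (induction ls arbitrary: F) (auto simp: R_chain_def fix_site_R_apply_commute)

lemma upt_split_at:
  assumes "s \<in> {1..N}"
  shows "[1..<Suc N] = [1..<s] @ s # [Suc s..<Suc N]"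
  using assms upt_add_eq_append[of 1 s "Suc N - s"] upt_conv_Cons[of s "Suc N"] by auto

text \<open>The trace over the auxiliary space localizes on site \<open>s\<close>, because \<open>R\<^sub>a\<^sub>,\<^sub>s(0) = \<eta> P\<^sub>a\<^sub>,\<^sub>s\<close>.\<close>

lemma transfer1_at_xi_apply:
  assumes s: "s \<in> {1..N}" and x: "x \<in> configs n N"
  shows "op_app n N (transfer1 n N eta xi K (xi s)) w x
       = eta * (\<Sum>c<n. R_chain eta xi (xi s) [1..<s]
            (fix_site s c (K_site_apply n K s (R_site_chain eta xi (xi s) s [Suc s..<Suc N] (tensor_unit c w))))
            (x s, x))"
proof -
  let ?Pre = "R_chain eta xi (xi s) [1..<s]" and ?Post = "R_site_chain eta xi (xi s) s [Suc s..<Suc N]"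
  have "K_apply n K (R_chain eta xi (xi s) [1..<Suc N] F)
      = aux_scale eta (swap_aux s (K_site_apply n K s (?Pre (?Post F))))" for F
  proof -
    have "R_chain eta xi (xi s) [1..<Suc N] F
        = R_chain eta xi (xi s) [Suc s..<Suc N] (aux_scale eta (swap_aux s (?Pre F)))"
      by (subst upt_split_at[OF s]) (simp add: R_chain_def R_apply_zero)
    also have "\<dots> = aux_scale eta (swap_aux s (?Post (?Pre F)))"
      by (simp add: R_chain_scale R_chain_swap_aux)
    also have "?Post (?Pre F) = ?Pre (?Post F)"
      by (rule R_site_chain_R_chain_commute) auto
    finally show ?thesis
      by (simp add: K_apply_scale K_apply_swap_aux)
  qed
  then have "K_apply n K (R_chain eta xi (xi s) [1..<Suc N] (tensor_unit c w)) (c,x)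
      = eta * ?Pre (fix_site s c (K_site_apply n K s (?Post (tensor_unit c w)))) (x s, x)" for c
    by (simp add: aux_scale_def swap_aux_def K_site_apply_R_chain_commute
        flip: fix_site_R_chain_commute, simp add: fix_site_def)
  then show ?thesis
    using x by (simp add: transfer1_apply sum_distrib_left)
qed

lemma R_chain_sum: "R_chain eta xi lam ls (\<lambda>p. \<Sum>c\<in>A. F c p) = (\<lambda>p. \<Sum>c\<in>A. R_chain eta xi lam ls (F c) p)"
proof (induction ls arbitrary: F)
  case (Cons l ls)
  have "R_apply eta l mu (\<lambda>p. \<Sum>c\<in>A. F c p) = (\<lambda>p. \<Sum>c\<in>A. R_apply eta l mu (F c) p)" for mu
    by (rule ext, clarify) (simp add: R_apply_def sum_distrib_left sum.distrib)
  then show ?case using Cons.IH by (simp add: R_chain_def)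
qed (simp add: R_chain_def)

lemma R_chain_eigen:
  assumes "distinct ls" "\<forall>l\<in>set ls. R_apply eta l (lam - xi l) U = aux_scale (f l) U"
  shows "R_chain eta xi lam ls U = aux_scale (\<Prod>l\<in>set ls. f l) U"
  using assms
proof (induction ls)
  case (Cons l ls)
  then have "R_chain eta xi lam (l # ls) U = aux_scale (f l) (aux_scale (\<Prod>l\<in>set ls. f l) U)"
    by (simp add: R_chain_def R_chain_scale[unfolded R_chain_def])
  then show ?case using Cons.prems by (simp add: aux_scale_def fun_eq_iff mult.assoc)
qed (simp add: R_chain_def aux_scale_def)

lemma R_site_chain_eigen:
  assumes "distinct js" "\<forall>j\<in>set js. R_site_apply eta s j (lam - xi j) U = aux_scale (f j) U"
  shows "R_site_chain eta xi lam s js U = aux_scale (\<Prod>j\<in>set js. f j) U"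
  using assms
proof (induction js)
  case (Cons j js)
  then have "R_site_chain eta xi lam s (j # js) U = aux_scale (f j) (aux_scale (\<Prod>j\<in>set js. f j) U)"
    by (simp add: R_site_chain_def R_site_chain_scale[unfolded R_site_chain_def])
  then show ?case using Cons.prems by (simp add: aux_scale_def fun_eq_iff mult.assoc)
qed (simp add: R_site_chain_def aux_scale_def)

lemma t0_vec_swap:
  assumes "s \<in> {1..N}" "j \<in> {1..N}"
  shows "t0_vec N W (x(s := x j, j := x s)) = t0_vec N W x"
proof -
  have "x(s := x j, j := x s) = x \<circ> Transposition.transpose s j"
    by (auto simp: fun_eq_iff Transposition.transpose_def)
  then show ?thesis
    using prod.permute[OF permutes_swap_id[OF assms], of "\<lambda>l. W $$ (x l, 0)"]
    by (simp add: t0_vec_def comp_def)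
qed

definition t0_site_aux :: "nat \<Rightarrow> nat \<Rightarrow> complex mat \<Rightarrow> avec" where
  "t0_site_aux N s W = (\<lambda>(b,y). t0_vec N W (y(s := b)))"

lemma R_apply_t0_site_aux:
  assumes "s \<in> {1..N}" "j \<in> {1..N}" "j \<noteq> s"
  shows "R_apply eta j mu (t0_site_aux N s W) = aux_scale (mu + eta) (t0_site_aux N s W)"
proof (rule ext, clarify)
  fix a :: nat and x :: config
  have "x(j := a, s := x j) = (x(s := a))(s := (x(s := a)) j, j := (x(s := a)) s)"
    using assms by (auto simp: fun_eq_iff)
  then have "t0_vec N W (x(j := a, s := x j)) = t0_vec N W (x(s := a))"
    using t0_vec_swap[OF assms(1,2)] by metis
  then show "R_apply eta j mu (t0_site_aux N s W) (a,x) = aux_scale (mu + eta) (t0_site_aux N s W) (a,x)"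
    by (simp add: R_apply_def t0_site_aux_def aux_scale_def algebra_simps)
qed

lemma R_site_apply_tensor_t0:
  assumes "s \<in> {1..N}" "j \<in> {1..N}"
  shows "R_site_apply eta s j mu (tensor_unit c (t0_vec N W)) = aux_scale (mu + eta) (tensor_unit c (t0_vec N W))"
  by (rule ext, clarify) (simp add: R_site_apply_def tensor_unit_def aux_scale_def t0_vec_swap[OF assms] algebra_simps)

lemma K_site_apply_tensor_t0:
  assumes s: "s \<in> {1..N}" and K_W: "\<forall>i<n. (\<Sum>b<n. K $$ (i,b) * W $$ (b,0)) = k1 * W $$ (i,0)"
  shows "aux_agree n N (K_site_apply n K s (tensor_unit c (t0_vec N W))) (aux_scale k1 (tensor_unit c (t0_vec N W)))"
  unfolding aux_agree_def
proof (intro allI impI ballI)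
  fix a x assume x: "x \<in> configs n N"
  let ?r = "\<Prod>l\<in>{1..N}-{s}. W $$ (x l, 0)"
  have t0_upd: "t0_vec N W (x(s := b)) = W $$ (b,0) * ?r" for b
    unfolding t0_vec_def using s by (subst prod.remove[of _ s]) (auto intro!: prod.cong)
  have "K_site_apply n K s (tensor_unit c (t0_vec N W)) (a,x)
      = (if a = c then (\<Sum>b<n. K $$ (x s, b) * W $$ (b,0)) * ?r else 0)"
    by (simp add: K_site_apply_def tensor_unit_def t0_upd sum_distrib_right mult.assoc)
  also have "\<dots> = (if a = c then k1 * W $$ (x s, 0) * ?r else 0)"
    using K_W configs_less[OF x s] by simp
  also have "\<dots> = aux_scale k1 (tensor_unit c (t0_vec N W)) (a,x)"
    using t0_upd[of "x s"] by (simp add: aux_scale_def tensor_unit_def mult.assoc)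
  finally show "K_site_apply n K s (tensor_unit c (t0_vec N W)) (a,x) = aux_scale k1 (tensor_unit c (t0_vec N W)) (a,x)" .
qed

lemma alpha1_at_xi:
  assumes "s \<in> {1..N}"
  shows "alpha1 N eta xi k1 (xi s) = eta * k1 * (\<Prod>j\<in>{1..N}-{s}. xi s - xi j + eta)"
proof -
  have "alpha1 N eta xi k1 (xi s) = k1 * ((xi s + eta - xi s) * (\<Prod>j\<in>{1..N}-{s}. xi s + eta - xi j))"
    unfolding alpha1_def using assms by (subst prod.remove) auto
  then show ?thesis by (simp add: algebra_simps)
qed

lemma transfer1_at_xi_t0_vec:
  assumes s: "s \<in> {1..N}" and x: "x \<in> configs n N"
    and K_W: "\<forall>i<n. (\<Sum>b<n. K $$ (i,b) * W $$ (b,0)) = k1 * W $$ (i,0)"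
  shows "op_app n N (transfer1 n N eta xi K (xi s)) (t0_vec N W) x = alpha1 N eta xi k1 (xi s) * t0_vec N W x"
proof -
  let ?t0 = "t0_vec N W" and ?Pre = "R_chain eta xi (xi s) [1..<s]"
  let ?Post = "R_site_chain eta xi (xi s) s [Suc s..<Suc N]"
  define P1 where "P1 = (\<Prod>j\<in>{1..<s}. xi s - xi j + eta)"
  define P2 where "P2 = (\<Prod>j\<in>{Suc s..<Suc N}. xi s - xi j + eta)"
  have xs: "x s < n" using configs_less[OF x s] .
  have Post: "?Post (tensor_unit c ?t0) = aux_scale P2 (tensor_unit c ?t0)" for c
  proof -
    have "?Post (tensor_unit c ?t0) = aux_scale (\<Prod>j\<in>set [Suc s..<Suc N]. xi s - xi j + eta) (tensor_unit c ?t0)"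
      using s by (intro R_site_chain_eigen) (auto simp: R_site_apply_tensor_t0)
    then show ?thesis by (simp only: P2_def set_upt)
  qed
  have site: "aux_agree n N (fix_site s c (K_site_apply n K s (?Post (tensor_unit c ?t0))))
      (aux_scale (k1 * P2) (fix_site s c (tensor_unit c ?t0)))" if c: "c < n" for c
    using K_site_apply_tensor_t0[OF s K_W, of c] fun_upd_in_configs[OF _ s c]
    unfolding Post K_site_apply_scale by (auto simp: aux_agree_def fix_site_def aux_scale_def)
  have pre_s: "set [1..<s] \<subseteq> {1..N}" using s by auto
  have "op_app n N (transfer1 n N eta xi K (xi s)) ?t0 x
      = eta * (\<Sum>c<n. ?Pre (aux_scale (k1 * P2) (fix_site s c (tensor_unit c ?t0))) (x s, x))"
  proof -
    have "?Pre (fix_site s c (K_site_apply n K s (?Post (tensor_unit c ?t0)))) (x s, x)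
        = ?Pre (aux_scale (k1 * P2) (fix_site s c (tensor_unit c ?t0))) (x s, x)" if "c < n" for c
      using R_chain_cong[OF pre_s site[OF that]] xs x unfolding aux_agree_def by blast
    then show ?thesis
      unfolding transfer1_at_xi_apply[OF s x] by (intro arg_cong[where f = "(*) eta"] sum.cong) auto
  qed
  also have "\<dots> = eta * k1 * P2 * ?Pre (\<lambda>p. \<Sum>c<n. fix_site s c (tensor_unit c ?t0) p) (x s, x)"
    unfolding R_chain_scale R_chain_sum by (simp add: aux_scale_def sum_distrib_left mult.assoc)
  also have "?Pre (\<lambda>p. \<Sum>c<n. fix_site s c (tensor_unit c ?t0) p) (x s, x) = ?Pre (t0_site_aux N s W) (x s, x)"
  proof -
    have agree: "aux_agree n N (\<lambda>p. \<Sum>c<n. fix_site s c (tensor_unit c ?t0) p) (t0_site_aux N s W)"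
      by (simp add: aux_agree_def fix_site_def tensor_unit_def t0_site_aux_def)
    show ?thesis using R_chain_cong[OF pre_s agree] xs x unfolding aux_agree_def by blast
  qed
  also have "?Pre (t0_site_aux N s W) = aux_scale P1 (t0_site_aux N s W)"
  proof -
    have "?Pre (t0_site_aux N s W) = aux_scale (\<Prod>j\<in>set [1..<s]. xi s - xi j + eta) (t0_site_aux N s W)"
      using s by (intro R_chain_eigen) (auto simp: R_apply_t0_site_aux)
    then show ?thesis by (simp only: P1_def set_upt)
  qed
  finally have "op_app n N (transfer1 n N eta xi K (xi s)) ?t0 x = eta * k1 * P2 * (P1 * ?t0 x)"
    by (simp add: aux_scale_def t0_site_aux_def)
  moreover have "P1 * P2 = (\<Prod>j\<in>{1..N}-{s}. xi s - xi j + eta)"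
  proof -
    have "{1..N}-{s} = {1..<s} \<union> {Suc s..<Suc N}" using s by auto
    then show ?thesis unfolding P1_def P2_def by (simp add: prod.union_disjoint)
  qed
  ultimately show ?thesis
    using alpha1_at_xi[OF s] by (simp add: algebra_simps)
qed

lemma first_column_eigvec_of_similar:
  fixes K W Winv KJ :: "complex mat"
  assumes K: "K \<in> carrier_mat n n" and W: "W \<in> carrier_mat n n" "Winv \<in> carrier_mat n n" "Winv * W = 1\<^sub>m n"
    and KJ: "KJ \<in> carrier_mat n n" "K = W * KJ * Winv"
    and k: "KJ *\<^sub>v unit_vec n 0 = k1 \<cdot>\<^sub>v unit_vec n 0" and n0: "0 < n"
  shows "\<forall>i<n. (\<Sum>b<n. K $$ (i,b) * W $$ (b,0)) = k1 * W $$ (i,0)"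
proof -
  let ?e = "unit_vec n 0 :: complex vec" and ?w = "W *\<^sub>v unit_vec n 0"
  have w: "?w \<in> carrier_vec n" using W by simp
  have "K *\<^sub>v ?w = (W * KJ) *\<^sub>v (Winv *\<^sub>v ?w)"
    unfolding KJ(2) using W KJ w by (intro assoc_mult_mat_vec) auto
  also have "Winv *\<^sub>v ?w = ?e" using W by (simp add: assoc_mult_mat_vec[symmetric])
  also have "(W * KJ) *\<^sub>v ?e = W *\<^sub>v (k1 \<cdot>\<^sub>v ?e)" using W KJ k by (simp add: assoc_mult_mat_vec)
  also have "\<dots> = k1 \<cdot>\<^sub>v ?w" using W by (simp add: mult_mat_vec)
  finally have Kw: "K *\<^sub>v ?w = k1 \<cdot>\<^sub>v ?w" .
  have w_entry: "?w $ b = W $$ (b,0)" if "b < n" for b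
    using that W n0 by simp
  show ?thesis
  proof (intro allI impI)
    fix i assume i: "i < n"
    have "(K *\<^sub>v ?w) $ i = (\<Sum>b<n. K $$ (i,b) * W $$ (b,0))"
      using K i w_entry W by (simp add: scalar_prod_def lessThan_atLeast0)
    then show "(\<Sum>b<n. K $$ (i,b) * W $$ (b,0)) = k1 * W $$ (i,0)"
      using Kw i W w_entry by simp
  qed
qed

lemma t0_vec_nonzero:
  fixes W Winv :: "complex mat"
  assumes W: "W \<in> carrier_mat n n" "Winv \<in> carrier_mat n n" "Winv * W = 1\<^sub>m n" and n0: "0 < n"
  shows "\<exists>x\<in>configs n N. t0_vec N W x \<noteq> 0"
proof -
  have "\<exists>i<n. W $$ (i,0) \<noteq> 0"
  proof (rule ccontr)
    assume "\<not> ?thesis"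
    then have z: "\<forall>i<n. W $$ (i,0) = 0" by auto
    have "(Winv * W) $$ (0,0) = (\<Sum>i<n. Winv $$ (0,i) * W $$ (i,0))"
      using W(1,2) n0 by (simp add: scalar_prod_def lessThan_atLeast0)
    also have "\<dots> = 0" using z by simp
    finally show False using W n0 by simp
  qed
  then obtain i where i: "i < n" "W $$ (i,0) \<noteq> 0" by blast
  let ?x = "restrict (\<lambda>_. i) {1..N}"
  have "?x \<in> configs n N" using i by (simp add: configs_def)
  moreover have "t0_vec N W ?x = W $$ (i,0) ^ N" by (simp add: t0_vec_def)
  moreover have "W $$ (i,0) ^ N \<noteq> 0" using i by simp
  ultimately show ?thesis by metis
qed

section \<open>The quantum spectral curve at the inhomogeneities\<close>

lemma tseq_vanishes_at_shifted_xi: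
  assumes "2 \<le> j" "j \<le> n" "s \<in> {1..N}"
  shows "tseq n N eta xi K t1 j (xi s + of_nat (j - 1) * eta) = 0"
proof -
  obtain m where j: "j = Suc (Suc m)" using assms(1) by (metis add_2_eq_Suc le_Suc_ex)
  let ?l = "xi s + of_nat (j - 1) * eta"
  show ?thesis
  proof (cases "j = n")
    case True
    have z: "?l - xi s - of_nat (j - 1) * eta = 0" by simp
    have "j - 1 \<in> {1..n-1}" using True j by auto
    have "(\<Prod>m\<in>{1..n-1}. ?l - xi s - of_nat m * eta) = 0"
      by (rule prod_zero) (use z \<open>j - 1 \<in> {1..n-1}\<close> in blast)+
    then have zz: "(?l - xi s + eta) * (\<Prod>m\<in>{1..n-1}. ?l - xi s - of_nat m * eta) = 0" by simp
    have "(\<Prod>b\<in>{1..N}. (?l - xi b + eta) * (\<Prod>m\<in>{1..n-1}. ?l - xi b - of_nat m * eta)) = 0"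
      by (rule prod_zero) (use zz assms(3) in blast)+
    then have "qdet n N eta xi K ?l = 0" by (simp add: qdet_def)
    moreover have "tseq n N eta xi K t1 (Suc (Suc m)) ?l = qdet n N eta xi K ?l"
      by (simp only: tseq.simps) (use True j in simp)
    ultimately show ?thesis using j by simp
  next
    case False
    have z: "?l - xi s - of_nat (Suc m) * eta = 0" using j by simp
    have zz: "(\<Prod>r\<in>{1..Suc m}. ?l - xi s - of_nat r * eta) = 0"
      by (rule prod_zero) (use z in \<open>auto intro!: bexI[of _ "Suc m"] simp del: of_nat_Suc\<close>)
    have "(\<Prod>b\<in>{1..N}. \<Prod>r\<in>{1..Suc m}. ?l - xi b - of_nat r * eta) = 0"
      by (rule prod_zero) (use zz assms(3) in blast)+
    moreover have "tseq n N eta xi K t1 (Suc (Suc m)) ?l = (\<Prod>b\<in>{1..N}. \<Prod>r\<in>{1..Suc m}. ?l - xi b - of_nat r * eta) *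
        (Tinf n K (Suc (Suc m)) * (\<Prod>b\<in>{1..N}. ?l - xi b)
         + (\<Sum>a\<in>{1..N}. g_coef N eta xi (Suc (Suc m)) a ?l * t1 (xi a)
              * tseq n N eta xi K t1 (Suc m) (xi a - eta)))"
      by (simp only: tseq.simps) (use False j in simp)
    ultimately show ?thesis using j by simp
  qed
qed

lemma alpha1_shifted_xi_nonzero:
  assumes generic: "\<forall>a\<in>{1..N}. \<forall>b\<in>{1..N}. a \<noteq> b \<longrightarrow>
                    (\<forall>r::int. \<bar>r\<bar> \<le> int n \<longrightarrow> xi a - xi b \<noteq> of_int r * eta)"
    and s: "s \<in> {1..N}" and eta: "eta \<noteq> 0" and k1: "k1 \<noteq> 0" and r: "r < n"
  shows "alpha1 N eta xi k1 (xi s + of_nat r * eta) \<noteq> 0"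
proof -
  have "xi s + of_nat r * eta + eta - xi a \<noteq> 0" if a: "a \<in> {1..N}" for a
  proof (cases "a = s")
    case True
    have "xi s + of_nat r * eta + eta - xi a = of_nat (Suc r) * eta"
      by (simp add: True algebra_simps)
    moreover have "(of_nat (Suc r) :: complex) \<noteq> 0" by (simp only: of_nat_eq_0_iff)
    ultimately show ?thesis using eta by simp
  next
    case False
    have "\<bar>- int (Suc r)\<bar> \<le> int n" using r by simp
    then have "xi s - xi a \<noteq> of_int (- int (Suc r)) * eta"
      by (rule generic[rule_format, OF s a not_sym[OF False]])
    moreover have "xi s + of_nat r * eta + eta - xi a = (xi s - xi a) - of_int (- int (Suc r)) * eta"
      by (simp add: algebra_simps)
    ultimately show ?thesis by (metis right_minus_eq)
  qed
  then show ?thesis using k1 by (simp add: alpha1_def)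
qed

text \<open>At \<open>\<lambda> = \<xi>\<^sub>s + (n - 1)\<eta>\<close> only the terms \<open>b = n - 1\<close> and \<open>b = n\<close> of the spectral curve survive.\<close>

lemma qsc_at_xi:
  fixes lams :: "nat \<Rightarrow> complex"
  assumes n2: "n \<ge> 2"
    and generic: "\<forall>a\<in>{1..N}. \<forall>b\<in>{1..N}. a \<noteq> b \<longrightarrow>
                    (\<forall>r::int. \<bar>r\<bar> \<le> int n \<longrightarrow> xi a - xi b \<noteq> of_int r * eta)"
    and s: "s \<in> {1..N}" and eta: "eta \<noteq> 0" and k1: "k1 \<noteq> 0"
    and qsc: "\<forall>lam. (\<Sum>b\<in>{0..n}. alpha N eta xi k1 b lam
                 * (\<Prod>a\<in>{1..M}. (lam - of_nat b * eta) - lams a)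
                 * tseq n N eta xi K t1 (n - b) (lam - of_nat b * eta)) = 0"
  shows "t1 (xi s) * (\<Prod>a\<in>{1..M}. xi s - lams a)
       = alpha1 N eta xi k1 (xi s) * (\<Prod>a\<in>{1..M}. (xi s - eta) - lams a)"
proof -
  obtain m where n: "n = Suc (Suc m)" using n2 by (metis add_2_eq_Suc le_Suc_ex)
  define l0 where "l0 = xi s + of_nat (Suc m) * eta"
  define F where "F b = alpha N eta xi k1 b l0
                 * (\<Prod>a\<in>{1..M}. (l0 - of_nat b * eta) - lams a)
                 * tseq n N eta xi K t1 (n - b) (l0 - of_nat b * eta)" for b
  define A where "A = alpha N eta xi k1 (Suc m) l0"
  have A: "A = (-1) ^ m * (\<Prod>h\<in>{0..m}. alpha1 N eta xi k1 (l0 - of_nat h * eta))"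
    by (simp add: A_def alpha_def)
  have F_low: "F b = 0" if b: "b \<le> m" for b
  proof -
    have "l0 - of_nat b * eta = xi s + of_nat ((n - b) - 1) * eta"
      using b n by (simp add: l0_def of_nat_diff algebra_simps)
    then show ?thesis
      using tseq_vanishes_at_shifted_xi[of "n - b" n s N eta xi K t1] b n s by (simp add: F_def)
  qed
  have "(\<Sum>b\<in>{0..n}. F b) = 0" using qsc unfolding F_def by blast
  moreover have "(\<Sum>b\<in>{0..n}. F b) = (\<Sum>b\<in>{0..m}. F b) + F (Suc m) + F (Suc (Suc m))"
    using n by (simp add: sum.atLeast0_atMost_Suc)
  ultimately have "F (Suc m) + F (Suc (Suc m)) = 0" using F_low by simp
  moreover have "F (Suc m) = A * (\<Prod>a\<in>{1..M}. xi s - lams a) * t1 (xi s)"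
    unfolding F_def A_def using n by (simp add: l0_def)
  moreover have "F (Suc (Suc m)) = - A * alpha1 N eta xi k1 (xi s) * (\<Prod>a\<in>{1..M}. (xi s - eta) - lams a)"
  proof -
    have "alpha N eta xi k1 (Suc (Suc m)) l0 = - A * alpha1 N eta xi k1 (xi s)"
      unfolding A by (simp add: alpha_def prod.atLeast0_atMost_Suc l0_def)
    then show ?thesis unfolding F_def using n by (simp add: l0_def algebra_simps)
  qed
  moreover have "A \<noteq> 0"
  proof -
    have "alpha1 N eta xi k1 (l0 - of_nat h * eta) \<noteq> 0" if "h \<le> m" for h
    proof -
      have shift: "l0 - of_nat h * eta = xi s + of_nat (Suc m - h) * eta"
        using that by (simp add: l0_def of_nat_diff algebra_simps)
      have "Suc m - h < n" using n by simp
      from alpha1_shifted_xi_nonzero[OF generic s eta k1 this] show ?thesis unfolding shift .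
    qed
    then show ?thesis unfolding A by simp
  qed
  ultimately show ?thesis by (simp add: algebra_simps)
qed

lemma t1_at_xi_relation:
  fixes lams :: "nat \<Rightarrow> complex"
  assumes n2: "n \<ge> 2"
    and generic: "\<forall>a\<in>{1..N}. \<forall>b\<in>{1..N}. a \<noteq> b \<longrightarrow>
                    (\<forall>r::int. \<bar>r\<bar> \<le> int n \<longrightarrow> xi a - xi b \<noteq> of_int r * eta)"
    and s: "s \<in> {1..N}" and k1: "k1 \<noteq> 0"
    and qsc: "\<forall>lam. (\<Sum>b\<in>{0..n}. alpha N eta xi k1 b lam
                 * (\<Prod>a\<in>{1..M}. (lam - of_nat b * eta) - lams a)
                 * tseq n N eta xi K t1 (n - b) (lam - of_nat b * eta)) = 0"
    and v: "\<exists>x\<in>configs n N. v x \<noteq> 0"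
      "\<forall>x\<in>configs n N. op_app n N (transfer1 n N eta xi K (xi s)) v x = t1 (xi s) * v x"
  shows "t1 (xi s) * (\<Prod>a\<in>{1..M}. xi s - lams a)
       = alpha1 N eta xi k1 (xi s) * (\<Prod>a\<in>{1..M}. (xi s - eta) - lams a)"
proof (cases "eta = 0")
  case True
  obtain x where x: "x \<in> configs n N" "v x \<noteq> 0" using v(1) by blast
  have "op_app n N (transfer1 n N eta xi K (xi s)) v x = 0"
    unfolding transfer1_at_xi_apply[OF s x(1)] True by simp
  then have "t1 (xi s) * v x = 0" using v(2) x by simp
  then have "t1 (xi s) = 0" using x by simp
  moreover have "alpha1 N eta xi k1 (xi s) = 0" using alpha1_at_xi[OF s] True by simp
  ultimately show ?thesis by simp
next
  case False
  with n2 generic s k1 qsc show ?thesis by (intro qsc_at_xi)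
qed

section \<open>Pairings with the separated covectors\<close>

definition pairing :: "nat \<Rightarrow> nat \<Rightarrow> hvec \<Rightarrow> hvec \<Rightarrow> complex" where
  "pairing n N phi u = (\<Sum>x\<in>configs n N. phi x * u x)"

lemma pairing_covec_app: "pairing n N (covec_app n N phi A) u = pairing n N phi (op_app n N A u)"
proof -
  have "pairing n N (covec_app n N phi A) u = (\<Sum>y\<in>configs n N. \<Sum>x\<in>configs n N. phi x * A x y * u y)"
    by (simp add: pairing_def covec_app_def sum_distrib_right)
  also have "\<dots> = pairing n N phi (op_app n N A u)"
    by (subst sum.swap) (simp add: pairing_def op_app_def sum_distrib_left mult.assoc)
  finally show ?thesis .
qed

lemma pairing_covec_app_eigvec:
  assumes "\<forall>x\<in>configs n N. op_app n N A u x = mu * u x"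
  shows "pairing n N (covec_app n N phi A) u = mu * pairing n N phi u"
  unfolding pairing_covec_app using assms by (simp add: pairing_def sum_distrib_left ac_simps)

lemma pairing_hcov:
  assumes eig: "\<forall>l\<in>{1..N}. \<forall>x\<in>configs n N. op_app n N (transfer1 n N eta xi K (xi l)) u x = mu l * u x"
  shows "pairing n N (hcov n N eta xi K S h) u = (\<Prod>l\<in>{1..N}. mu l ^ h l) * pairing n N S u"
proof -
  have power: "pairing n N (((\<lambda>phi. covec_app n N phi (transfer1 n N eta xi K (xi l))) ^^ k) phi) u
      = mu l ^ k * pairing n N phi u" if l: "l \<in> {1..N}" for l k phi
    using pairing_covec_app_eigvec[OF bspec[OF eig l]] by (induction k) simp_all
  have "pairing n N (hcov_aux n N eta xi K S h l) u = (\<Prod>j\<in>{1..l}. mu j ^ h j) * pairing n N S u"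
    if "l \<le> N" for l
    using that
  proof (induction l)
    case (Suc l)
    then show ?case by (simp add: power prod.cl_ivl_Suc mult.assoc)
  qed simp
  then show ?thesis by (simp add: hcov_def)
qed

lemma pairing_B_prod:
  assumes "\<forall>lam. \<forall>y\<in>configs n N. covec_app n N phi (B lam) y = b lam * phi y"
  shows "pairing n N phi (B_prod n N B lams M u) = (\<Prod>j\<in>{1..M}. b (lams j)) * pairing n N phi u"
proof (induction M arbitrary: u)
  case (Suc M)
  have "pairing n N phi (op_app n N (B (lams (Suc M))) u) = b (lams (Suc M)) * pairing n N phi u"
    unfolding pairing_covec_app[symmetric] using assms by (simp add: pairing_def sum_distrib_left mult.assoc)
  then show ?case using Suc by (simp add: prod.cl_ivl_Suc ac_simps)
qed simp

lemma dual_basis_separates: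
  assumes basis: "is_dual_basis n N cv" and zero: "\<forall>h\<in>configs n N. pairing n N (cv h) u = 0"
  shows "\<forall>x\<in>configs n N. u x = 0"
proof
  fix x0 assume x0: "x0 \<in> configs n N"
  define delta where "delta y = (if y = x0 then 1 else 0 :: complex)" for y
  obtain c where c: "\<forall>y\<in>configs n N. delta y = (\<Sum>h\<in>configs n N. c h * cv h y)"
    using basis unfolding is_dual_basis_def by blast
  have "pairing n N delta u = (\<Sum>y\<in>configs n N. if y = x0 then u y else 0)"
    unfolding pairing_def by (intro sum.cong) (auto simp: delta_def)
  then have "u x0 = pairing n N delta u"
    using x0 by (simp add: configs_finite)
  also have "\<dots> = (\<Sum>y\<in>configs n N. \<Sum>h\<in>configs n N. c h * cv h y * u y)"
    using c by (simp add: pairing_def sum_distrib_right)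
  also have "\<dots> = (\<Sum>h\<in>configs n N. c h * pairing n N (cv h) u)"
    by (subst sum.swap) (simp add: pairing_def sum_distrib_left mult.assoc)
  also have "\<dots> = 0" using zero by simp
  finally show "u x0 = 0" .
qed

lemma dual_basis_pairings_proportional:
  assumes basis: "is_dual_basis n N cv"
    and pairings: "\<forall>h\<in>configs n N. pairing n N (cv h) u = k * pairing n N (cv h) u'"
  shows "\<forall>x\<in>configs n N. u x = k * u' x"
proof -
  have "\<forall>h\<in>configs n N. pairing n N (cv h) (\<lambda>x. u x - k * u' x) = 0"
    using pairings by (simp add: pairing_def sum_subtractf sum_distrib_left algebra_simps)
  from dual_basis_separates[OF basis this] show ?thesis by simp
qed

lemma pairing_reference_nonzero:
  assumes basis: "is_dual_basis n N cv" and u: "\<exists>x\<in>configs n N. u x \<noteq> 0"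
    and pairings: "\<forall>h\<in>configs n N. pairing n N (cv h) u = f h * pairing n N S u"
  shows "pairing n N S u \<noteq> 0"
  using dual_basis_separates[OF basis] u pairings by auto

lemma eigvec_determined_by_pairings:
  assumes basis: "is_dual_basis n N cv"
    and separated: "\<And>w. \<forall>lam. \<forall>x\<in>configs n N. op_app n N (T lam) w x = t lam * w x
        \<Longrightarrow> \<forall>h\<in>configs n N. pairing n N (cv h) w = psi h * pairing n N S w"
    and v: "\<exists>x\<in>configs n N. v x \<noteq> 0" "\<forall>lam. \<forall>x\<in>configs n N. op_app n N (T lam) v x = t lam * v x"
    and u: "\<forall>h\<in>configs n N. pairing n N (cv h) u = psi h * d" and d: "d \<noteq> 0"
  shows "(\<exists>x\<in>configs n N. u x \<noteq> 0)
       \<and> (\<forall>lam. \<forall>x\<in>configs n N. op_app n N (T lam) u x = t lam * u x)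
       \<and> (\<forall>w. (\<forall>lam. \<forall>x\<in>configs n N. op_app n N (T lam) w x = t lam * w x)
              \<longrightarrow> (\<exists>c. \<forall>x\<in>configs n N. w x = c * u x))"
proof -
  have w_u: "\<forall>x\<in>configs n N. w x = (pairing n N S w / d) * u x"
    if w: "\<forall>lam. \<forall>x\<in>configs n N. op_app n N (T lam) w x = t lam * w x" for w
  proof (rule dual_basis_pairings_proportional[OF basis], intro ballI)
    fix h assume h: "h \<in> configs n N"
    show "pairing n N (cv h) w = pairing n N S w / d * pairing n N (cv h) u"
      using separated[OF w] u h d by simp
  qed
  have "pairing n N S v \<noteq> 0"
    using pairing_reference_nonzero[OF basis v(1) separated[OF v(2)]] .
  have u_v: "\<forall>x\<in>configs n N. u x = (d / pairing n N S v) * v x"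
  proof (rule dual_basis_pairings_proportional[OF basis], intro ballI)
    fix h assume h: "h \<in> configs n N"
    show "pairing n N (cv h) u = d / pairing n N S v * pairing n N (cv h) v"
      using separated[OF v(2)] u h \<open>pairing n N S v \<noteq> 0\<close> by simp
  qed
  have "op_app n N (T lam) u x = (d / pairing n N S v) * op_app n N (T lam) v x" for lam x
  proof -
    have "op_app n N (T lam) u x = (\<Sum>y\<in>configs n N. T lam x y * ((d / pairing n N S v) * v y))"
      unfolding op_app_def using u_v by (intro sum.cong) auto
    then show ?thesis by (simp add: op_app_def sum_distrib_left mult.left_commute)
  qed
  then have "\<forall>lam. \<forall>x\<in>configs n N. op_app n N (T lam) u x = t lam * u x"
    using v(2) u_v by (simp add: mult.left_commute)
  moreover have "\<exists>x\<in>configs n N. u x \<noteq> 0"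
  proof -
    obtain x where "x \<in> configs n N" "v x \<noteq> 0" using v(1) by blast
    then show ?thesis using w_u[OF v(2)] by (metis mult_zero_right)
  qed
  moreover have "\<exists>c. \<forall>x\<in>configs n N. w x = c * u x"
    if "\<forall>lam. \<forall>x\<in>configs n N. op_app n N (T lam) w x = t lam * w x" for w
    using w_u[OF that] by blast
  ultimately show ?thesis by blast
qed

lemma prod_diff_commute: "(\<Prod>j\<in>A. z - l j) = (-1) ^ card A * (\<Prod>j\<in>A. l j - (z :: 'a :: comm_ring_1))"
proof -
  have "(\<Prod>j\<in>A. z - l j) = (\<Prod>j\<in>A. - 1 * (l j - z))" by simp
  then show ?thesis by (simp only: prod.distrib prod_constant)
qed

lemma prod_b_eig_mult_powers:
  fixes lams :: "nat \<Rightarrow> complex" and c t :: "nat \<Rightarrow> complex"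
  assumes h: "h \<in> configs n N"
    and rel: "\<forall>l\<in>{1..N}. t l * (\<Prod>a\<in>{1..M}. xi l - lams a) = c l * (\<Prod>a\<in>{1..M}. (xi l - eta) - lams a)"
  shows "(\<Prod>j\<in>{1..M}. b_eig n N eta xi h (lams j)) * (\<Prod>l\<in>{1..N}. c l ^ h l)
       = (\<Prod>l\<in>{1..N}. (\<Prod>j\<in>{1..M}. lams j - xi l) ^ (n - 1)) * (\<Prod>l\<in>{1..N}. t l ^ h l)"
proof -
  define P where "P l = (\<Prod>j\<in>{1..M}. lams j - xi l)" for l
  define Q where "Q l = (\<Prod>j\<in>{1..M}. lams j - xi l + eta)" for l
  have Qc: "Q l * c l = P l * t l" if l: "l \<in> {1..N}" for l
  proof -
    have rel_l: "t l * (\<Prod>a\<in>{1..M}. xi l - lams a) = c l * (\<Prod>a\<in>{1..M}. (xi l - eta) - lams a)"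
      using rel l by blast
    have P_sign: "(\<Prod>a\<in>{1..M}. xi l - lams a) = (-1) ^ M * P l"
      unfolding P_def by (simp add: prod_diff_commute[where z = "xi l"])
    have Q_sign: "(\<Prod>a\<in>{1..M}. (xi l - eta) - lams a) = (-1) ^ M * Q l"
      unfolding Q_def prod_diff_commute[where z = "xi l - eta"] by (simp add: algebra_simps)
    have "(-1) ^ M * (t l * P l) = (-1) ^ M * (c l * Q l)"
      using rel_l unfolding P_sign Q_sign by (simp only: mult.left_commute)
    then have "t l * P l = c l * Q l" by simp
    then show ?thesis by (simp only: mult.commute)
  qed
  have b_eig_lams: "(\<Prod>j\<in>{1..M}. b_eig n N eta xi h (lams j)) = (\<Prod>l\<in>{1..N}. P l ^ (n - 1 - h l) * Q l ^ h l)"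
    unfolding b_eig_def P_def Q_def by (subst prod.swap) (simp add: prod.distrib prod_power_distrib)
  have powers: "P l ^ (n - 1 - h l) * Q l ^ h l * c l ^ h l = P l ^ (n - 1) * t l ^ h l"
    if l: "l \<in> {1..N}" for l
  proof -
    have "P l ^ (n - 1 - h l) * Q l ^ h l * c l ^ h l = P l ^ (n - 1 - h l) * (P l * t l) ^ h l"
      by (simp add: Qc[OF l, symmetric] power_mult_distrib mult.assoc)
    also have "\<dots> = P l ^ (n - 1 - h l + h l) * t l ^ h l"
      by (simp add: power_mult_distrib power_add mult.assoc)
    finally show ?thesis using configs_less[OF h l] by simp
  qed
  have "(\<Prod>j\<in>{1..M}. b_eig n N eta xi h (lams j)) * (\<Prod>l\<in>{1..N}. c l ^ h l)
      = (\<Prod>l\<in>{1..N}. P l ^ (n - 1 - h l) * Q l ^ h l * c l ^ h l)"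
    by (simp only: b_eig_lams prod.distrib)
  also have "\<dots> = (\<Prod>l\<in>{1..N}. P l ^ (n - 1) * t l ^ h l)"
    by (rule prod.cong[OF refl powers])
  also have "\<dots> = (\<Prod>l\<in>{1..N}. P l ^ (n - 1)) * (\<Prod>l\<in>{1..N}. t l ^ h l)"
    by (rule prod.distrib)
  finally show ?thesis by (simp only: P_def)
qed

lemma pairing_hcov_t0_vec:
  assumes K_W: "\<forall>i<n. (\<Sum>b<n. K $$ (i,b) * W $$ (b,0)) = k1 * W $$ (i,0)"
  shows "pairing n N (hcov n N eta xi K S h) (t0_vec N W)
       = (\<Prod>l\<in>{1..N}. alpha1 N eta xi k1 (xi l) ^ h l) * pairing n N S (t0_vec N W)"
  using transfer1_at_xi_t0_vec[OF _ _ K_W] by (intro pairing_hcov) blast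

lemma pairing_hcov_bethe_vector:
  fixes lams :: "nat \<Rightarrow> complex"
  assumes K_W: "\<forall>i<n. (\<Sum>b<n. K $$ (i,b) * W $$ (b,0)) = k1 * W $$ (i,0)"
    and h: "h \<in> configs n N"
    and B: "\<forall>lam. \<forall>y\<in>configs n N. covec_app n N (hcov n N eta xi K S h) (B lam) y
                 = b_eig n N eta xi h lam * hcov n N eta xi K S h y"
    and rel: "\<forall>l\<in>{1..N}. t1 (xi l) * (\<Prod>a\<in>{1..M}. xi l - lams a)
                 = alpha1 N eta xi k1 (xi l) * (\<Prod>a\<in>{1..M}. (xi l - eta) - lams a)"
  shows "pairing n N (hcov n N eta xi K S h) (B_prod n N B lams M (t0_vec N W))
       = (\<Prod>l\<in>{1..N}. t1 (xi l) ^ h l)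
         * ((\<Prod>l\<in>{1..N}. (\<Prod>j\<in>{1..M}. lams j - xi l) ^ (n - 1)) * pairing n N S (t0_vec N W))"
proof -
  have "pairing n N (hcov n N eta xi K S h) (B_prod n N B lams M (t0_vec N W))
      = (\<Prod>j\<in>{1..M}. b_eig n N eta xi h (lams j)) * pairing n N (hcov n N eta xi K S h) (t0_vec N W)"
    by (rule pairing_B_prod[OF B])
  also have "\<dots> = (\<Prod>j\<in>{1..M}. b_eig n N eta xi h (lams j)) * (\<Prod>l\<in>{1..N}. alpha1 N eta xi k1 (xi l) ^ h l)
      * pairing n N S (t0_vec N W)"
    unfolding pairing_hcov_t0_vec[OF K_W] by (simp only: mult.assoc)
  also have "\<dots> = (\<Prod>l\<in>{1..N}. t1 (xi l) ^ h l)
      * ((\<Prod>l\<in>{1..N}. (\<Prod>j\<in>{1..M}. lams j - xi l) ^ (n - 1)) * pairing n N S (t0_vec N W))"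
    unfolding prod_b_eig_mult_powers[OF h rel] by (simp only: mult_ac)
  finally show ?thesis .
qed

theorem mainTheorem6:
  fixes n N M :: nat and eta k1 :: complex and xi lams :: "nat \<Rightarrow> complex"
    and K W Winv KJ :: "complex mat" and n_as :: "(nat \<times> complex) list"
    and S :: hvec and t1 :: "complex \<Rightarrow> complex" and B :: "complex \<Rightarrow> hop"
  assumes n2: "n \<ge> 2" and N1: "N \<ge> 1"
    and generic: "\<forall>a\<in>{1..N}. \<forall>b\<in>{1..N}. a \<noteq> b \<longrightarrow>
                    (\<forall>r::int. \<bar>r\<bar> \<le> int n \<longrightarrow> xi a - xi b \<noteq> of_int r * eta)"
    and K: "K \<in> carrier_mat n n" and wsimple: "w_simple K"
    and W: "W \<in> carrier_mat n n" "Winv \<in> carrier_mat n n"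
           "W * Winv = 1\<^sub>m n" "Winv * W = 1\<^sub>m n"
    and KJ: "KJ = jordan_matrix n_as" "KJ \<in> carrier_mat n n" "K = W * KJ * Winv"
    and k1: "KJ *\<^sub>v unit_vec n 0 = k1 \<cdot>\<^sub>v unit_vec n 0" "k1 \<noteq> 0"
    and basis: "is_dual_basis n N (hcov n N eta xi K S)"
    and Bdef: "\<forall>lam. \<forall>h\<in>configs n N. \<forall>y\<in>configs n N.
                 covec_app n N (hcov n N eta xi K S h) (B lam) y
                   = b_eig n N eta xi h lam * hcov n N eta xi K S h y"
    and eigval: "\<exists>v. (\<exists>x\<in>configs n N. v x \<noteq> 0) \<and>
                 (\<forall>lam. \<forall>x\<in>configs n N.
                    op_app n N (transfer1 n N eta xi K lam) v x = t1 lam * v x)"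
    and M: "M \<le> N" and roots: "\<forall>a\<in>{1..M}. \<forall>b\<in>{1..N}. lams a \<noteq> xi b"
    and qsc: "\<forall>lam. (\<Sum>b\<in>{0..n}. alpha N eta xi k1 b lam
                 * (\<Prod>a\<in>{1..M}. (lam - of_nat b * eta) - lams a)
                 * tseq n N eta xi K t1 (n - b) (lam - of_nat b * eta)) = 0"
  shows "(\<exists>x\<in>configs n N. B_prod n N B lams M (t0_vec N W) x \<noteq> 0)
       \<and> (\<forall>lam. \<forall>x\<in>configs n N.
            op_app n N (transfer1 n N eta xi K lam) (B_prod n N B lams M (t0_vec N W)) x
              = t1 lam * B_prod n N B lams M (t0_vec N W) x)
       \<and> (\<forall>w. (\<forall>lam. \<forall>x\<in>configs n N.
                  op_app n N (transfer1 n N eta xi K lam) w x = t1 lam * w x)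
              \<longrightarrow> (\<exists>c. \<forall>x\<in>configs n N. w x = c * B_prod n N B lams M (t0_vec N W) x))"
proof -
  let ?C = "configs n N" and ?t0 = "t0_vec N W" and ?hc = "hcov n N eta xi K S"
  define psi where "psi h = (\<Prod>l\<in>{1..N}. t1 (xi l) ^ h l)" for h
  define D where "D = (\<Prod>l\<in>{1..N}. (\<Prod>j\<in>{1..M}. lams j - xi l) ^ (n - 1))"
  obtain v where v: "\<exists>x\<in>?C. v x \<noteq> 0"
      "\<forall>lam. \<forall>x\<in>?C. op_app n N (transfer1 n N eta xi K lam) v x = t1 lam * v x"
    using eigval by blast
  have n0: "0 < n" using n2 by simp
  note K_W = first_column_eigvec_of_similar[OF K W(1,2,4) KJ(2,3) k1(1) n0]
  have "\<forall>h\<in>?C. pairing n N (?hc h) ?t0 = (\<Prod>l\<in>{1..N}. alpha1 N eta xi k1 (xi l) ^ h l) * pairing n N S ?t0"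
    using pairing_hcov_t0_vec[OF K_W] by blast
  then have "pairing n N S ?t0 \<noteq> 0"
    by (rule pairing_reference_nonzero[OF basis t0_vec_nonzero[OF W(1,2,4) n0]])
  moreover have "D \<noteq> 0" unfolding D_def using roots by (auto simp: prod_zero_iff)
  ultimately have d: "D * pairing n N S ?t0 \<noteq> 0" by simp
  have rel: "\<forall>l\<in>{1..N}. t1 (xi l) * (\<Prod>a\<in>{1..M}. xi l - lams a)
      = alpha1 N eta xi k1 (xi l) * (\<Prod>a\<in>{1..M}. (xi l - eta) - lams a)"
    using v(2) by (blast intro: t1_at_xi_relation[OF n2 generic _ k1(2) qsc v(1)])
  have B_t0: "\<forall>h\<in>?C. pairing n N (?hc h) (B_prod n N B lams M ?t0) = psi h * (D * pairing n N S ?t0)"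
    unfolding psi_def D_def using Bdef by (blast intro: pairing_hcov_bethe_vector[OF K_W _ _ rel])
  have separated: "\<forall>h\<in>?C. pairing n N (?hc h) w = psi h * pairing n N S w"
    if "\<forall>lam. \<forall>x\<in>?C. op_app n N (transfer1 n N eta xi K lam) w x = t1 lam * w x" for w
    unfolding psi_def using that by (intro ballI pairing_hcov) blast
  show ?thesis by (rule eigvec_determined_by_pairings[OF basis separated v B_t0 d])
qed

end
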